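(* Let $\phi\in L^2(\mathbb{R}^3,\mathbb{C}^2)$ be not the zero function. Then there exists $A\in SU(2)$ such that $\phi$ and $A\bullet\phi$ are linearly independent.
   Context: Let $\sigma=(\sigma_1,\sigma_2,\sigma_3)$ be the Pauli matrices. To each $A\in SU(2)$ is associated the unique rotation $R_A\in SO(3)$ such that $(R_Ax)\cdot\sigma=A(x\cdot\sigma)A^{-1}$ for all $x\in\mathbb{R}^3$. The unitary representation $\bullet$ of $SU(2)$ on $L^2(\mathbb{R}^3,\mathbb{C}^2)$ is $(A\bullet\phi)(x):=A\,\phi(R_A^{-1}x)$. *)

theory Defs
  imports "HOL-Analysis.Analysis"
begin

definition sigma1 :: "complex^2^2" where
  "sigma1 = (\<chi> i j. if i \<noteq> j then 1 else 0)"
definition sigma2 :: "complex^2^2" where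
  "sigma2 = (\<chi> i j. if i = 1 \<and> j = 2 then - \<i> else if i = 2 \<and> j = 1 then \<i> else 0)"
definition sigma3 :: "complex^2^2" where
  "sigma3 = (\<chi> i j. if i = j then (if i = 1 then 1 else -1) else 0)"

definition sigma_dot :: "real^3 \<Rightarrow> complex^2^2" where
  "sigma_dot x = (x$1) *\<^sub>R sigma1 + (x$2) *\<^sub>R sigma2 + (x$3) *\<^sub>R sigma3"

definition adjoint_mat :: "complex^2^2 \<Rightarrow> complex^2^2" where
  "adjoint_mat A = (\<chi> i j. cnj (A$j$i))"

definition SU2 :: "(complex^2^2) set" where
  "SU2 = {A. A ** adjoint_mat A = mat 1 \<and> det A = 1}"

definition SO3 :: "(real^3^3) set" where
  "SO3 = {R. R ** transpose R = mat 1 \<and> det R = 1}"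

definition rotA :: "complex^2^2 \<Rightarrow> real^3^3" where
  "rotA A = (THE R. R \<in> SO3 \<and>
      (\<forall>x. sigma_dot (R *v x) = A ** sigma_dot x ** matrix_inv A))"

definition su2_act :: "complex^2^2 \<Rightarrow> (real^3 \<Rightarrow> complex^2) \<Rightarrow> (real^3 \<Rightarrow> complex^2)" where
  "su2_act A \<phi> = (\<lambda>x. A *v \<phi> (matrix_inv (rotA A) *v x))"

text \<open>Representatives of elements of L^2(R^3, C^2).\<close>
definition L2 :: "(real^3 \<Rightarrow> complex^2) set" where
  "L2 = {\<phi>. \<phi> \<in> borel_measurable lebesgue \<and> integrable lebesgue (\<lambda>x. (norm (\<phi> x))^2)}"

end

theory Submission imports Defs begin

text \<open>
  The elements i sigma1 and i sigma3 of SU(2) act on R^3 through the rotations by pi about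
  the x- and z-axes, which commute, whereas i sigma1 and i sigma3 themselves anticommute.
  If phi were proportional to its image under every A in SU(2), it would be a common
  eigenfunction of both actions; applying them in the two orders shows that the value phi(R x), R the
  rotation by pi about the y-axis, is a vector on which i sigma1 and i sigma3 commute,
  hence zero, so phi vanishes almost everywhere.
\<close>

definition i_sigma1 :: "complex^2^2" where
  "i_sigma1 = (\<chi> i j. if i \<noteq> j then \<i> else 0)"

definition i_sigma3 :: "complex^2^2" where
  "i_sigma3 = (\<chi> i j. if i = j then (if i = 1 then \<i> else - \<i>) else 0)"

definition rot_x_pi :: "real^3^3" where
  "rot_x_pi = (\<chi> i j. if i = j then (if i = 1 then 1 else -1) else 0)"

definition rot_y_pi :: "real^3^3" where
  "rot_y_pi = (\<chi> i j. if i = j then (if i = 2 then 1 else -1) else 0)"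

definition rot_z_pi :: "real^3^3" where
  "rot_z_pi = (\<chi> i j. if i = j then (if i = 3 then 1 else -1) else 0)"

lemma matrix_inv_unique:
  fixes A B :: "'a::semiring_1^'n^'n"
  assumes "A ** B = mat 1" "B ** A = mat 1"
  shows "matrix_inv A = B"
proof -
  let ?C = "matrix_inv A"
  have C: "A ** ?C = mat 1 \<and> ?C ** A = mat 1"
    unfolding matrix_inv_def by (rule someI[of _ B]) (use assms in blast)
  have "?C = ?C ** (A ** B)" using assms by (simp add: matrix_mul_rid)
  also have "\<dots> = (?C ** A) ** B" by (simp add: matrix_mul_assoc)
  also have "\<dots> = B" using C by (simp add: matrix_mul_lid)
  finally show ?thesis .
qed

lemma AE_lebesgue_compose_left_invertible_linear:
  fixes f g :: "'a::euclidean_space \<Rightarrow> 'a"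
  assumes "linear g" and g_f: "\<And>x. g (f x) = x" and "AE x in lebesgue. P x"
  shows "AE x in lebesgue. P (f x)"
proof -
  have "negligible {x. \<not> P x}"
    using assms(3) by (simp add: completion.AE_iff_null_sets negligible_iff_null_sets)
  then have "negligible (g ` {x. \<not> P x})"
    by (intro negligible_differentiable_image_negligible linear_imp_differentiable_on \<open>linear g\<close>) auto
  moreover have "{x. \<not> P (f x)} \<subseteq> g ` {x. \<not> P x}"
    using g_f by (auto intro: rev_image_eqI)
  ultimately have "negligible {x. \<not> P (f x)}"
    by (rule negligible_subset)
  then show ?thesis
    by (simp add: completion.AE_iff_null_sets negligible_iff_null_sets)
qed

lemma AE_lebesgue_compose_involution_matrix:
  fixes M :: "real^'n^'n"
  assumes "M ** M = mat 1" and "AE x in lebesgue. P x"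
  shows "AE x in lebesgue. P (M *v x)"
proof (rule AE_lebesgue_compose_left_invertible_linear[OF matrix_vector_mul_linear _ assms(2)])
  show "M *v (M *v x) = x" for x
    using assms(1) by (simp add: matrix_vector_mul_assoc)
qed

lemma AE_multiple_if_dependent:
  fixes \<phi> \<psi> :: "'a \<Rightarrow> 'k::field^'n"
  assumes "(a, b) \<noteq> (0, 0)" and dep: "AE x in M. a *s \<phi> x + b *s \<psi> x = 0"
    and "\<not> (AE x in M. \<phi> x = 0)"
  shows "\<exists>c. AE x in M. \<psi> x = c *s \<phi> x"
proof (cases "b = 0")
  case True
  with assms(1) have "a \<noteq> 0" by simp
  from dep have "AE x in M. \<phi> x = 0"
    by eventually_elim (use True \<open>a \<noteq> 0\<close> in simp)
  with assms(3) show ?thesis by blast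
next
  case False
  from dep have "AE x in M. \<psi> x = (- a / b) *s \<phi> x"
  proof eventually_elim
    case (elim x)
    then have "b *s \<psi> x = - (a *s \<phi> x)"
      by (simp add: eq_neg_iff_add_eq_0 add.commute)
    then have "(1 / b) *s (b *s \<psi> x) = (1 / b) *s - (a *s \<phi> x)"
      by simp
    with False show ?case by (simp add: vector_smult_assoc)
  qed
  then show ?thesis by blast
qed

lemma sigma_dot_inj: "sigma_dot x = sigma_dot y \<Longrightarrow> x = y"
proof -
  assume eq: "sigma_dot x = sigma_dot y"
  have "sigma_dot x $1$1 = sigma_dot y $1$1" "sigma_dot x $1$2 = sigma_dot y $1$2"
    "sigma_dot x $2$2 = sigma_dot y $2$2"
    using eq by auto
  then show ?thesis
    by (auto simp: sigma_dot_def sigma1_def sigma2_def sigma3_def vec_eq_iff forall_3 complex_eq_iff)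
qed

lemma rotA_eqI:
  assumes "R \<in> SO3" and "\<And>x. sigma_dot (R *v x) = A ** sigma_dot x ** matrix_inv A"
  shows "rotA A = R"
  unfolding rotA_def
proof (rule the_equality)
  fix R' assume "R' \<in> SO3 \<and> (\<forall>x. sigma_dot (R' *v x) = A ** sigma_dot x ** matrix_inv A)"
  then have "R' *v x = R *v x" for x
    using assms(2) sigma_dot_inj by metis
  then show "R' = R" by (simp add: matrix_eq)
qed (use assms in blast)

lemma su2_act_eq:
  assumes "rotA A = R" and "R ** R = mat 1"
  shows "su2_act A \<phi> = (\<lambda>x. A *v \<phi> (R *v x))"
  using assms by (simp add: su2_act_def matrix_inv_unique)

lemma i_sigma1_SU2: "i_sigma1 \<in> SU2"
  by (auto simp: SU2_def i_sigma1_def adjoint_mat_def det_2 matrix_matrix_mult_def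
      vec_eq_iff forall_2 sum_2 mat_def)

lemma i_sigma3_SU2: "i_sigma3 \<in> SU2"
  by (auto simp: SU2_def i_sigma3_def adjoint_mat_def det_2 matrix_matrix_mult_def
      vec_eq_iff forall_2 sum_2 mat_def)

lemma matrix_inv_i_sigma1: "matrix_inv i_sigma1 = - i_sigma1"
  by (rule matrix_inv_unique)
    (auto simp: i_sigma1_def matrix_matrix_mult_def vec_eq_iff forall_2 sum_2 mat_def)

lemma matrix_inv_i_sigma3: "matrix_inv i_sigma3 = - i_sigma3"
  by (rule matrix_inv_unique)
    (auto simp: i_sigma3_def matrix_matrix_mult_def vec_eq_iff forall_2 sum_2 mat_def)

lemma i_sigma1_i_sigma3_commute_imp_zero:
  "i_sigma3 *v (i_sigma1 *v y) = i_sigma1 *v (i_sigma3 *v y) \<Longrightarrow> y = 0"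
  by (auto simp: i_sigma1_def i_sigma3_def matrix_vector_mult_def
      vec_eq_iff forall_2 sum_2)

lemma rot_x_pi_SO3: "rot_x_pi \<in> SO3"
  by (auto simp: SO3_def rot_x_pi_def det_3 matrix_matrix_mult_def transpose_def vec_eq_iff
      forall_3 sum_3 mat_def)

lemma rot_z_pi_SO3: "rot_z_pi \<in> SO3"
  by (auto simp: SO3_def rot_z_pi_def det_3 matrix_matrix_mult_def transpose_def vec_eq_iff
      forall_3 sum_3 mat_def)

lemma rot_x_pi_involution: "rot_x_pi ** rot_x_pi = mat 1"
  by (auto simp: rot_x_pi_def matrix_matrix_mult_def vec_eq_iff forall_3 sum_3 mat_def)

lemma rot_y_pi_involution: "rot_y_pi ** rot_y_pi = mat 1"
  by (auto simp: rot_y_pi_def matrix_matrix_mult_def vec_eq_iff forall_3 sum_3 mat_def)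

lemma rot_z_pi_involution: "rot_z_pi ** rot_z_pi = mat 1"
  by (auto simp: rot_z_pi_def matrix_matrix_mult_def vec_eq_iff forall_3 sum_3 mat_def)

lemma rot_x_pi_rot_z_pi: "rot_x_pi *v (rot_z_pi *v x) = rot_y_pi *v x"
  by (auto simp: rot_x_pi_def rot_y_pi_def rot_z_pi_def matrix_vector_mult_def vec_eq_iff
      forall_3 sum_3)

lemma rot_z_pi_rot_x_pi: "rot_z_pi *v (rot_x_pi *v x) = rot_y_pi *v x"
  by (auto simp: rot_x_pi_def rot_y_pi_def rot_z_pi_def matrix_vector_mult_def vec_eq_iff
      forall_3 sum_3)

lemma rotA_i_sigma1: "rotA i_sigma1 = rot_x_pi"
  by (rule rotA_eqI[OF rot_x_pi_SO3], unfold matrix_inv_i_sigma1)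
    (auto simp: sigma_dot_def rot_x_pi_def i_sigma1_def sigma1_def sigma2_def
      sigma3_def matrix_matrix_mult_def matrix_vector_mult_def vec_eq_iff forall_2 forall_3 sum_2
      sum_3 complex_eq_iff)

lemma rotA_i_sigma3: "rotA i_sigma3 = rot_z_pi"
  by (rule rotA_eqI[OF rot_z_pi_SO3], unfold matrix_inv_i_sigma3)
    (auto simp: sigma_dot_def rot_z_pi_def i_sigma3_def sigma1_def sigma2_def
      sigma3_def matrix_matrix_mult_def matrix_vector_mult_def vec_eq_iff forall_2 forall_3 sum_2
      sum_3 complex_eq_iff)

lemma su2_act_i_sigma1: "su2_act i_sigma1 \<phi> = (\<lambda>x. i_sigma1 *v \<phi> (rot_x_pi *v x))"
  by (rule su2_act_eq[OF rotA_i_sigma1 rot_x_pi_involution])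

lemma su2_act_i_sigma3: "su2_act i_sigma3 \<phi> = (\<lambda>x. i_sigma3 *v \<phi> (rot_z_pi *v x))"
  by (rule su2_act_eq[OF rotA_i_sigma3 rot_z_pi_involution])

lemma AE_zero_if_eigenfunction_i_sigma1_i_sigma3:
  fixes \<phi> :: "real^3 \<Rightarrow> complex^2"
  assumes p: "AE x in lebesgue. su2_act i_sigma1 \<phi> x = p *s \<phi> x"
    and q: "AE x in lebesgue. su2_act i_sigma3 \<phi> x = q *s \<phi> x"
  shows "AE x in lebesgue. \<phi> x = 0"
proof -
  have p': "AE x in lebesgue. i_sigma1 *v \<phi> (rot_y_pi *v x) = p *s \<phi> (rot_z_pi *v x)"
    using AE_lebesgue_compose_involution_matrix[OF rot_z_pi_involution p]
    by (simp add: su2_act_i_sigma1 rot_x_pi_rot_z_pi)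
  have q': "AE x in lebesgue. i_sigma3 *v \<phi> (rot_y_pi *v x) = q *s \<phi> (rot_x_pi *v x)"
    using AE_lebesgue_compose_involution_matrix[OF rot_x_pi_involution q]
    by (simp add: su2_act_i_sigma3 rot_z_pi_rot_x_pi)
  have "AE x in lebesgue. \<phi> (rot_y_pi *v x) = 0"
    using p q p' q'
  proof eventually_elim
    case (elim x)
    then have "i_sigma3 *v (i_sigma1 *v \<phi> (rot_y_pi *v x)) = (p * q) *s \<phi> x"
      "i_sigma1 *v (i_sigma3 *v \<phi> (rot_y_pi *v x)) = (q * p) *s \<phi> x"
      by (simp_all add: su2_act_i_sigma1 su2_act_i_sigma3 vector_scalar_commute vector_smult_assoc)
    then show ?case
      by (intro i_sigma1_i_sigma3_commute_imp_zero) (simp add: mult.commute)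
  qed
  from AE_lebesgue_compose_involution_matrix[OF rot_y_pi_involution this]
  show ?thesis by (simp add: matrix_vector_mul_assoc rot_y_pi_involution)
qed

theorem lemma1:
  fixes \<phi> :: "real^3 \<Rightarrow> complex^2"
  assumes "\<phi> \<in> L2"
    and "\<not> (AE x in lebesgue. \<phi> x = 0)"
  shows "\<exists>A\<in>SU2. \<not> (\<exists>a b :: complex. (a, b) \<noteq> (0, 0) \<and>
            (AE x in lebesgue. a *s \<phi> x + b *s su2_act A \<phi> x = 0))"
proof (rule ccontr)
  assume "\<not> ?thesis"
  then have eigen: "\<exists>c. AE x in lebesgue. su2_act A \<phi> x = c *s \<phi> x" if "A \<in> SU2" for A
    using that AE_multiple_if_dependent[OF _ _ assms(2)] by blast
  obtain p where "AE x in lebesgue. su2_act i_sigma1 \<phi> x = p *s \<phi> x"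
    using eigen[OF i_sigma1_SU2] by blast
  moreover obtain q where "AE x in lebesgue. su2_act i_sigma3 \<phi> x = q *s \<phi> x"
    using eigen[OF i_sigma3_SU2] by blast
  ultimately have "AE x in lebesgue. \<phi> x = 0"
    by (rule AE_zero_if_eigenfunction_i_sigma1_i_sigma3)
  with assms(2) show False by blast
qed

end
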